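(* Let $\Theta\subset\mathbb{R}^d$ be open and bounded, let $(X_{\mathcal D},\Pi_{\mathcal D},\nabla_{\mathcal D})$ be a gradient discretisation with piecewise constant reconstruction as described in the context, let $\delta t>0$, and let $\zeta:\mathbb{R}\to\mathbb{R}$ be non-decreasing and Lipschitz continuous with $\zeta(0)=0$ and $0\le\zeta'\le L_\zeta$ a.e. Let $L\ge L_\zeta/2$ and let $r\in L^2(\Theta)$ be a fixed function (in the scheme, $r=\Pi_{\mathcal D}u^{n-1}+f(\zeta(\Pi_{\mathcal D}u^{n-1}))\Delta^nW$ for a fixed realisation). Suppose $u^n\in X_{\mathcal D}$ satisfies $$\langle \Pi_{\mathcal D}u^n,\Pi_{\mathcal D}\varphi\rangle+\delta t\,\langle\nabla_{\mathcal D}\zeta(u^n),\nabla_{\mathcal D}\varphi\rangle=\langle r,\Pi_{\mathcal D}\varphi\rangle\quad\forall\varphi\in X_{\mathcal D}.$$ Let $u^{n,0}\in X_{\mathcal D}$ be arbitrary and define $(u^{n,i})_{i\ge1}\subset X_{\mathcal D}$ by: $u^{n,i}$ is the solution of $$\langle \Pi_{\mathcal D}u^{n,i},\Pi_{\mathcal D}\varphi\rangle+\delta t\,L\,\langle\nabla_{\mathcal D}u^{n,i},\nabla_{\mathcal D}\varphi\rangle=\delta t\,\langle L\nabla_{\mathcal D}u^{n,i-1}-\nabla_{\mathcal D}\zeta(u^{n,i-1}),\nabla_{\mathcal D}\varphi\rangle+\langle r,\Pi_{\mathcal D}\varphi\rangle\quad\forall\varphi\in X_{\mathcal D}.$$ Then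 $\|\Pi_{\mathcal D}u^{n,i}-\Pi_{\mathcal D}u^n\|_{*,\mathcal D}\to0$ as $i\to\infty$.
   Context: A gradient discretisation with piecewise constant reconstruction consists of: a finite-dimensional real vector space $X_{\mathcal D}$ with basis $(\mathbf e_j)_{j\in B}$ ($B$ a finite index set); a family of disjoint measurable subsets $(\Theta_j)_{j\in B}$ of $\Theta$ and the linear map $\Pi_{\mathcal D}:X_{\mathcal D}\to L^\infty(\Theta)$, $\Pi_{\mathcal D}v=\sum_{j\in B}v_j\mathbf 1_{\Theta_j}$ for $v=\sum_j v_j\mathbf e_j$; and a linear map $\nabla_{\mathcal D}:X_{\mathcal D}\to L^2(\Theta)^d$ such that $v\mapsto\|\nabla_{\mathcal D}v\|_{L^2(\Theta)}$ is a norm on $X_{\mathcal D}$. For $g:\mathbb{R}\to\mathbb{R}$ with $g(0)=0$ and $v=(v_j)_{j\in B}\in X_{\mathcal D}$, set $g(v):=(g(v_j))_{j\in B}\in X_{\mathcal D}$; then $\Pi_{\mathcal D}g(v)=g(\Pi_{\mathcal D}v)$. $\langle\cdot,\cdot\rangle$ denotes the $L^2(\Theta)$ (or $L^2(\Theta)^d$) inner product and $\|\cdot\|$ its norm. The discrete dual norm on $\Pi_{\mathcal D}(X_{\mathcal D})$ is $\|v\|_{*,\mathcal D}:=\sup\{\int_\Theta v\,\Pi_{\mathcal D}w\,dx: w\in X_{\mathcal D},\ \|\nabla_{\mathcal D}w\|=1\}$. *)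

theory Defs
  imports "HOL-Analysis.Analysis"
begin

definition L2 :: "'a::euclidean_space set \<Rightarrow> ('a \<Rightarrow> 'c::real_normed_vector) \<Rightarrow> bool" where
  "L2 \<Theta> f \<longleftrightarrow> f \<in> borel_measurable (lebesgue_on \<Theta>)
       \<and> integrable (lebesgue_on \<Theta>) (\<lambda>x. (norm (f x))\<^sup>2)"

definition innerL2 :: "'a::euclidean_space set \<Rightarrow> ('a \<Rightarrow> real) \<Rightarrow> ('a \<Rightarrow> real) \<Rightarrow> real" where
  "innerL2 \<Theta> f g = (\<integral>x. f x * g x \<partial>(lebesgue_on \<Theta>))"

definition innerL2v :: "'a::euclidean_space set \<Rightarrow> ('a \<Rightarrow> 'a) \<Rightarrow> ('a \<Rightarrow> 'a) \<Rightarrow> real" where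
  "innerL2v \<Theta> F G = (\<integral>x. F x \<bullet> G x \<partial>(lebesgue_on \<Theta>))"

text \<open>Piecewise constant reconstruction; X_D is identified with 'b \<Rightarrow> real for a finite index type 'b
  (coordinates with respect to the basis (e_j)).\<close>
definition PiD :: "('b::finite \<Rightarrow> 'a::euclidean_space set) \<Rightarrow> ('b \<Rightarrow> real) \<Rightarrow> 'a \<Rightarrow> real" where
  "PiD \<Theta>s v = (\<lambda>x. \<Sum>j\<in>UNIV. v j * indicator (\<Theta>s j) x)"

definition grad_disc_pc ::
  "'a::euclidean_space set \<Rightarrow> ('b::finite \<Rightarrow> 'a set) \<Rightarrow> (('b \<Rightarrow> real) \<Rightarrow> 'a \<Rightarrow> 'a) \<Rightarrow> bool" where
  "grad_disc_pc \<Theta> \<Theta>s G \<longleftrightarrow>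
     disjoint_family \<Theta>s \<and> (\<forall>j. \<Theta>s j \<in> sets lebesgue \<and> \<Theta>s j \<subseteq> \<Theta>)
     \<and> (\<forall>a v w. G (\<lambda>j. a * v j + w j) = (\<lambda>x. a *\<^sub>R G v x + G w x))
     \<and> (\<forall>v. L2 \<Theta> (G v))
     \<and> (\<forall>v. innerL2v \<Theta> (G v) (G v) = 0 \<longrightarrow> v = (\<lambda>_. 0))"

definition dual_normD ::
  "'a::euclidean_space set \<Rightarrow> ('b::finite \<Rightarrow> 'a set) \<Rightarrow> (('b \<Rightarrow> real) \<Rightarrow> 'a \<Rightarrow> 'a) \<Rightarrow> ('a \<Rightarrow> real) \<Rightarrow> real" where
  "dual_normD \<Theta> \<Theta>s G f =
     Sup {innerL2 \<Theta> f (PiD \<Theta>s w) | w. sqrt (innerL2v \<Theta> (G w) (G w)) = 1}"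

end

theory Submission
  imports Defs
begin

(* Write e_i = u^{n,i} - u^n. Subtracting the equation of u^n from that of u^{n,i}, r cancels and
     M(e_i, phi) + dt L A(e_i, phi) = dt (L A(e_{i-1}, phi) - A(zeta(u^{n,i-1}) - zeta(u^n), phi)),
   where M(v, w) = sum_j |Theta_j| v_j w_j is the mass form of the piecewise constant reconstruction
   and A the inner product of discrete gradients. If W_i represents M(e_i, .) with respect to A,
   then the dual norm of Pi e_i is ||W_i||_A. Testing with W_i turns every A-term into a cellwise
   sum; as 0 <= zeta' <= L_zeta <= 2L gives |L (p - q) - (zeta p - zeta q)| <= L |p - q|,
   Young's inequality yields
     ||W_i||_A^2 <= dt L/2 (M(e_{i-1}, e_{i-1}) - M(e_i, e_i)),
   so ||W_i||_A^2 is dominated by the decrements of a nonnegative sequence and tends to 0.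
   The slope bound on zeta comes from the a.e. bound on zeta' through the change of variables
   formula. *)

lemma measure_image_le_if_deriv_bounded:
  fixes f f' :: "real \<Rightarrow> real"
  assumes S: "S \<in> lmeasurable" and bdd: "bounded (f ` S)" and inj: "inj_on f S"
    and der: "\<And>x. x \<in> S \<Longrightarrow> (f has_field_derivative f' x) (at x within S)"
    and bound: "\<And>x. x \<in> S \<Longrightarrow> \<bar>f' x\<bar> \<le> B"
  shows "f ` S \<in> lmeasurable \<and> measure lebesgue (f ` S) \<le> B * measure lebesgue S"
proof -
  have "f differentiable_on S"
    using der by (auto simp: differentiable_on_def real_differentiable_def)
  then have "f ` S \<in> sets lebesgue"
    using S by (intro differentiable_image_in_sets_lebesgue) auto
  then have fS: "f ` S \<in> lmeasurable"
    by (rule bounded_set_imp_lmeasurable[OF bdd])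
  then have "(\<lambda>_. 1::real) absolutely_integrable_on f ` S"
    by (simp add: lmeasurable_iff_integrable_on absolutely_integrable_on_iff_nonneg)
  then have f'_int: "(\<lambda>x. \<bar>f' x\<bar>) absolutely_integrable_on S"
    and f'_integral: "integral S (\<lambda>x. \<bar>f' x\<bar>) = measure lebesgue (f ` S)"
    using has_absolute_integral_change_of_variables_1'[OF _ der inj, of "\<lambda>_. 1"]
      lmeasure_integral[OF fS] S by auto
  have "integral S (\<lambda>x. \<bar>f' x\<bar>) \<le> integral S (\<lambda>_. B)"
  proof (rule integral_le)
    show "(\<lambda>x. \<bar>f' x\<bar>) integrable_on S"
      using f'_int by (rule absolutely_integrable_on_def[THEN iffD1, THEN conjunct1])
    show "(\<lambda>_. B) integrable_on S"
      using S by (rule integrable_on_const)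
  qed (rule bound)
  also have "\<dots> = B * integral S (\<lambda>_. 1)"
    using integral_mult_right[of S B "\<lambda>_. 1"] by simp
  also have "\<dots> = B * measure lebesgue S"
    by (simp add: lmeasure_integral[OF S])
  finally show ?thesis
    using fS f'_integral by simp
qed

lemma negligible_image_if_lipschitz:
  fixes g :: "'a::euclidean_space \<Rightarrow> 'a"
  assumes "K-lipschitz_on UNIV g" and "negligible N"
  shows "negligible (g ` N)"
proof (rule negligible_locally_Lipschitz_image)
  show "\<exists>T C. open T \<and> x \<in> T \<and> (\<forall>y \<in> N \<inter> T. norm (g y - g x) \<le> C * norm (y - x))" for x
    using lipschitz_onD[OF assms(1)] by (intro exI[of _ UNIV] exI[of _ K]) (simp add: dist_norm)
qed (use assms(2) in simp_all)

lemma increment_le_measure_image: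
  fixes g :: "real \<Rightarrow> real"
  assumes cont: "continuous_on {a..b} g" and "a \<le> b"
    and null: "negligible (g ` (N \<inter> {a..b}))" and meas: "g ` ({a..b} - N) \<in> lmeasurable"
  shows "g b - g a \<le> measure lebesgue (g ` ({a..b} - N))"
proof -
  have "{g a..g b} \<subseteq> g ` ({a..b} - N) \<union> g ` (N \<inter> {a..b})"
  proof
    fix y assume "y \<in> {g a..g b}"
    then obtain x where "a \<le> x" "x \<le> b" "g x = y"
      using IVT'[of g a y b] cont \<open>a \<le> b\<close> by auto
    then show "y \<in> g ` ({a..b} - N) \<union> g ` (N \<inter> {a..b})"
      by auto
  qed
  then have covered: "measure lebesgue {g a..g b} \<le> measure lebesgue (g ` ({a..b} - N))"
    using meas null measure_Un_null_set[of "g ` ({a..b} - N)" lebesgue]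
      measure_mono_fmeasurable[of "{g a..g b}" "g ` ({a..b} - N) \<union> g ` (N \<inter> {a..b})" lebesgue]
    by (simp add: negligible_iff_null_sets fmeasurableI_null_sets fmeasurable.Un)
  show ?thesis
  proof (cases "g a \<le> g b")
    case True
    then show ?thesis
      using covered by simp
  next
    case False
    then show ?thesis
      using measure_nonneg[of lebesgue "g ` ({a..b} - N)"] by linarith
  qed
qed

lemma increment_le_if_ae_deriv_bounded:
  fixes g :: "real \<Rightarrow> real"
  assumes mono: "strict_mono g" and lip: "K-lipschitz_on UNIV g"
    and ae: "AE x in lborel. g differentiable (at x) \<and> \<bar>deriv g x\<bar> \<le> B"
    and "a \<le> b"
  shows "g b - g a \<le> B * (b - a)"
proof -
  obtain N where N: "negligible N" "{x. \<not> (g differentiable (at x) \<and> \<bar>deriv g x\<bar> \<le> B)} \<subseteq> N"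
    using AE_completion[OF ae] unfolding eventually_ae_filter_negligible by auto
  define S where "S = {a..b} - N"
  have S: "S \<in> lmeasurable"
    unfolding S_def using N(1)
    by (intro bounded_set_imp_lmeasurable) (auto intro: bounded_subset simp: negligible_iff_null_sets)
  have "g ` S \<subseteq> {g a..g b}"
    unfolding S_def using monoD[OF strict_mono_mono[OF mono]] by auto
  then have bdd: "bounded (g ` S)"
    by (rule bounded_subset[OF bounded_closed_interval])
  have der: "(g has_field_derivative deriv g x) (at x within S)"
    and deriv_bound: "\<bar>deriv g x\<bar> \<le> B" if "x \<in> S" for x
  proof -
    have "g differentiable (at x)" "\<bar>deriv g x\<bar> \<le> B"
      using N(2) that unfolding S_def by auto
    then show "(g has_field_derivative deriv g x) (at x within S)" "\<bar>deriv g x\<bar> \<le> B"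
      by (simp_all add: DERIV_deriv_iff_real_differentiable has_field_derivative_at_within)
  qed
  have gS: "g ` S \<in> lmeasurable" and gS_le: "measure lebesgue (g ` S) \<le> B * measure lebesgue S"
    using measure_image_le_if_deriv_bounded[OF S bdd strict_mono_imp_inj_on[OF mono] der deriv_bound]
    by blast+
  have "negligible (g ` (N \<inter> {a..b}))"
    using lip by (rule negligible_image_if_lipschitz) (use N(1) negligible_subset in blast)
  then have "g b - g a \<le> measure lebesgue (g ` S)"
    using lipschitz_on_continuous_on[OF lip] \<open>a \<le> b\<close> gS unfolding S_def
    by (intro increment_le_measure_image) (auto intro: continuous_on_subset)
  also have "\<dots> \<le> B * (b - a)"
  proof -
    have "measure lebesgue S \<le> measure lebesgue {a..b}"
      using S by (intro measure_mono_fmeasurable) (auto simp: S_def)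
    then have "measure lebesgue S \<le> b - a"
      using \<open>a \<le> b\<close> by simp
    moreover obtain x where "\<bar>deriv g x\<bar> \<le> B"
      using eventually_happens'[of "ae_filter lborel"] ae by (auto simp: ae_filter_eq_bot_iff)
    then have "0 \<le> B"
      by linarith
    ultimately show ?thesis
      using gS_le by (meson mult_left_mono order_trans)
  qed
  finally show ?thesis .
qed

lemma slope_le_if_ae_deriv_le:
  fixes \<zeta> :: "real \<Rightarrow> real"
  assumes mono: "mono \<zeta>" and lip: "K-lipschitz_on UNIV \<zeta>"
    and ae: "AE x in lborel. \<zeta> differentiable (at x) \<and> 0 \<le> deriv \<zeta> x \<and> deriv \<zeta> x \<le> L\<^sub>\<zeta>"
    and "a \<le> b"
  shows "\<zeta> b - \<zeta> a \<le> L\<^sub>\<zeta> * (b - a)"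
proof -
  txt \<open>Adding the identity makes \<open>\<zeta>\<close> strictly increasing, hence injective, as the change of
    variables formula requires.\<close>
  define g where "g x = \<zeta> x + x" for x
  have "strict_mono g"
  proof (rule strict_monoI)
    fix x y :: real
    assume "x < y"
    then show "g x < g y"
      using monoD[OF mono, of x y] by (simp add: g_def)
  qed
  moreover have "(K + 1)-lipschitz_on UNIV g"
    unfolding g_def using lip by (intro lipschitz_on_add lipschitz_on_id)
  moreover have "AE x in lborel. g differentiable (at x) \<and> \<bar>deriv g x\<bar> \<le> L\<^sub>\<zeta> + 1"
    using ae
  proof (rule eventually_mono, elim conjE)
    fix x assume "\<zeta> differentiable (at x)" "0 \<le> deriv \<zeta> x" "deriv \<zeta> x \<le> L\<^sub>\<zeta>"
    then have "(g has_field_derivative deriv \<zeta> x + 1) (at x)"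
      unfolding g_def by (auto intro!: derivative_eq_intros simp: DERIV_deriv_iff_real_differentiable)
    then show "g differentiable (at x) \<and> \<bar>deriv g x\<bar> \<le> L\<^sub>\<zeta> + 1"
      using \<open>0 \<le> deriv \<zeta> x\<close> \<open>deriv \<zeta> x \<le> L\<^sub>\<zeta>\<close>
      by (auto simp: DERIV_imp_deriv real_differentiable_def)
  qed
  ultimately have "g b - g a \<le> (L\<^sub>\<zeta> + 1) * (b - a)"
    using \<open>a \<le> b\<close> by (rule increment_le_if_ae_deriv_bounded)
  then show ?thesis
    by (simp add: g_def algebra_simps)
qed

lemma abs_relaxation_residual_le:
  fixes \<zeta> :: "real \<Rightarrow> real"
  assumes mono: "mono \<zeta>" and slope: "\<And>a b. a \<le> b \<Longrightarrow> \<zeta> b - \<zeta> a \<le> L\<^sub>\<zeta> * (b - a)"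
    and L: "L\<^sub>\<zeta> / 2 \<le> L"
  shows "\<bar>L * (p - q) - (\<zeta> p - \<zeta> q)\<bar> \<le> L * \<bar>p - q\<bar>"
proof -
  have residual_le: "\<bar>L * (b - a) - (\<zeta> b - \<zeta> a)\<bar> \<le> L * (b - a)" if "a \<le> b" for a b
  proof -
    have "L\<^sub>\<zeta> * (b - a) \<le> 2 * L * (b - a)"
      using L that by (intro mult_right_mono) auto
    then show ?thesis
      using slope[OF that] monoD[OF mono that] by (simp add: abs_le_iff)
  qed
  show ?thesis
  proof (cases "q \<le> p")
    case True
    then show ?thesis
      using residual_le[of q p] by simp
  next
    case False
    have "L * (p - q) - (\<zeta> p - \<zeta> q) = - (L * (q - p) - (\<zeta> q - \<zeta> p))"
      by (simp add: algebra_simps)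
    then show ?thesis
      using residual_le[of p q] False by simp
  qed
qed

lemma relaxation_energy_le:
  fixes L x y z :: real
  assumes L: "0 \<le> L" and residual: "\<bar>L * y - z\<bar> \<le> L * \<bar>y\<bar>"
  shows "x * (L * y - z - L * x) \<le> L / 2 * (y\<^sup>2 - x\<^sup>2)"
proof -
  have "x * (L * y - z) \<le> \<bar>x\<bar> * \<bar>L * y - z\<bar>"
    by (simp flip: abs_mult)
  also have "\<dots> \<le> \<bar>x\<bar> * (L * \<bar>y\<bar>)"
    using residual by (rule mult_left_mono) simp
  also have "\<dots> \<le> L / 2 * (x\<^sup>2 + y\<^sup>2)"
  proof -
    have "2 * \<bar>x\<bar> * \<bar>y\<bar> \<le> x\<^sup>2 + y\<^sup>2"
      using sum_squares_bound[of "\<bar>x\<bar>" "\<bar>y\<bar>"] by simp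
    from mult_left_mono[OF this, of "L / 2"] show ?thesis
      using L by (simp add: algebra_simps)
  qed
  finally show ?thesis
    by (simp add: power2_eq_square algebra_simps)
qed

lemma LIMSEQ_zero_if_le_decrements:
  fixes x D :: "nat \<Rightarrow> real"
  assumes x: "\<And>n. 0 \<le> x (Suc n)" and le: "\<And>n. x (Suc n) \<le> D n - D (Suc n)"
    and D: "\<And>n. 0 \<le> D n"
  shows "x \<longlonglongrightarrow> 0"
proof -
  have "decseq D"
  proof (rule decseq_SucI)
    show "D (Suc n) \<le> D n" for n
      using x[of n] le[of n] by linarith
  qed
  then obtain l where lim: "D \<longlonglongrightarrow> l"
    using decseq_convergent[of D 0] D by blast
  have decrements: "(\<lambda>n. D n - D (Suc n)) \<longlonglongrightarrow> 0"
    using tendsto_diff[OF lim LIMSEQ_Suc[OF lim]] by simp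
  have "(\<lambda>n. x (Suc n)) \<longlonglongrightarrow> 0"
  proof (rule tendsto_sandwich[OF _ _ tendsto_const decrements])
    show "\<forall>\<^sub>F n in sequentially. 0 \<le> x (Suc n)"
      using x by simp
    show "\<forall>\<^sub>F n in sequentially. x (Suc n) \<le> D n - D (Suc n)"
      using le by simp
  qed
  then show ?thesis
    by (rule LIMSEQ_imp_Suc)
qed

text \<open>Linearity on the coordinate space \<open>'b \<Rightarrow> real\<close> of \<open>X_D\<close>, which carries no
  \<open>real_vector\<close> structure here, so the library notion \<open>linear\<close> is not available.\<close>

definition linear_functional :: "(('b \<Rightarrow> real) \<Rightarrow> real) \<Rightarrow> bool" where
  "linear_functional l \<longleftrightarrow> (\<forall>c v w. l (\<lambda>j. c * v j + w j) = c * l v + l w)"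

lemma linear_functionalD: "linear_functional l \<Longrightarrow> l (\<lambda>j. c * v j + w j) = c * l v + l w"
  by (simp add: linear_functional_def)

lemma linear_functional_zero: "linear_functional l \<Longrightarrow> l (\<lambda>_. 0) = 0"
  using linear_functionalD[of l 1 "\<lambda>_. 0" "\<lambda>_. 0"] by simp

lemma linear_functional_scale: "linear_functional l \<Longrightarrow> l (\<lambda>j. c * v j) = c * l v"
  using linear_functionalD[of l c v "\<lambda>_. 0"] linear_functional_zero[of l] by simp

lemma linear_functional_add: "linear_functional l \<Longrightarrow> l (\<lambda>j. v j + w j) = l v + l w"
  using linear_functionalD[of l 1 v w] by simp

lemma linear_functional_diff: "linear_functional l \<Longrightarrow> l (\<lambda>j. v j - w j) = l v - l w"
  using linear_functionalD[of l "-1" w v] by simp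

lemma linear_functional_weighted_sum: "linear_functional (\<lambda>v. \<Sum>j\<in>UNIV. c j * v j)"
  by (simp add: linear_functional_def algebra_simps sum.distrib sum_distrib_left)

lemma linear_functional_expansion:
  fixes l :: "('b::finite \<Rightarrow> real) \<Rightarrow> real"
  assumes l: "linear_functional l"
  shows "l v = (\<Sum>k\<in>UNIV. v k * l (\<lambda>j. if j = k then 1 else 0))"
proof -
  define \<delta> :: "'b \<Rightarrow> 'b \<Rightarrow> real" where "\<delta> k j = (if j = k then 1 else 0)" for k j
  have partial_sums: "l (\<lambda>j. \<Sum>k\<in>F. v k * \<delta> k j) = (\<Sum>k\<in>F. v k * l (\<delta> k))" if "finite F" for F
    using that
  proof (induction F rule: finite_induct)
    case empty
    then show ?case
      using linear_functional_zero[OF l] by simp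
  next
    case (insert k F)
    then show ?case
      using linear_functionalD[OF l, of "v k" "\<delta> k" "\<lambda>j. \<Sum>k\<in>F. v k * \<delta> k j"] by simp
  qed
  have "(\<lambda>j. \<Sum>k\<in>UNIV. v k * \<delta> k j) = v"
  proof
    fix j
    have "(\<Sum>k\<in>UNIV. v k * \<delta> k j) = (\<Sum>k\<in>UNIV. if k = j then v k else 0)"
      unfolding \<delta>_def by (rule sum.cong) auto
    then show "(\<Sum>k\<in>UNIV. v k * \<delta> k j) = v j"
      by simp
  qed
  then have "l v = l (\<lambda>j. \<Sum>k\<in>UNIV. v k * \<delta> k j)"
    by simp
  also have "\<dots> = (\<Sum>k\<in>UNIV. v k * l (\<delta> k))"
    by (rule partial_sums) simp
  finally show ?thesis
    unfolding \<delta>_def .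
qed

locale inner_product_form =
  fixes a :: "('b::finite \<Rightarrow> real) \<Rightarrow> ('b \<Rightarrow> real) \<Rightarrow> real"
  assumes linear_left: "linear_functional (\<lambda>v. a v w)"
    and sym: "a v w = a w v"
    and nonneg: "0 \<le> a v v"
    and definite: "a v v = 0 \<Longrightarrow> v = (\<lambda>_. 0)"
begin

lemma linear_right: "linear_functional (a v)"
proof -
  have "a v = (\<lambda>w. a w v)"
    using sym by blast
  then show ?thesis
    using linear_left by simp
qed

lemma scale_left: "a (\<lambda>j. c * v j) w = c * a v w"
  using linear_functional_scale[OF linear_left] .

lemma diff_left: "a (\<lambda>j. v j - w j) z = a v z - a w z"
  using linear_functional_diff[OF linear_left] .

lemma scale_right: "a v (\<lambda>j. c * w j) = c * a v w"
  using linear_functional_scale[OF linear_right] .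

lemma representation:
  assumes l: "linear_functional l"
  shows "\<exists>W. \<forall>\<phi>. a W \<phi> = l \<phi>"
proof -
  define \<delta> :: "'b \<Rightarrow> 'b \<Rightarrow> real" where "\<delta> k j = (if j = k then 1 else 0)" for k j
  txt \<open>\<open>T\<close> is the Gram map \<open>v \<mapsto> (a v \<delta>\<^sub>k)\<^sub>k\<close>, moved to \<open>real^'b\<close> to use that an injective linear
    endomorphism of a finite-dimensional space is surjective.\<close>
  define T :: "real^'b \<Rightarrow> real^'b" where "T x = (\<chi> k. a (($) x) (\<delta> k))" for x
  have "linear T"
  proof (rule linearI)
    fix x y :: "real^'b" and c :: real
    have "($) (x + y) = (\<lambda>j. x $ j + y $ j)" "($) (c *\<^sub>R x) = (\<lambda>j. c * x $ j)"
      by auto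
    then show "T (x + y) = T x + T y" "T (c *\<^sub>R x) = c *\<^sub>R T x"
      unfolding T_def vec_eq_iff
      by (simp_all add: linear_functional_add[OF linear_left] scale_left)
  qed
  moreover have "inj T"
  proof (rule injI)
    fix x y assume "T x = T y"
    define d where "d j = x $ j - y $ j" for j
    have "a d (\<delta> k) = 0" for k
      using \<open>T x = T y\<close> unfolding d_def T_def vec_eq_iff
      by (simp add: diff_left)
    then have "a d d = 0"
      using linear_functional_expansion[OF linear_right, of d d] unfolding \<delta>_def by simp
    then have "d = (\<lambda>_. 0)"
      by (rule definite)
    then show "x = y"
      unfolding d_def vec_eq_iff fun_eq_iff by simp
  qed
  ultimately have "surj T"
    by (rule linear_inj_imp_surj)
  then obtain x where x: "T x = (\<chi> k. l (\<delta> k))"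
    by (metis surj_def)
  show ?thesis
  proof (intro exI allI)
    fix \<phi>
    have "a (($) x) \<phi> = (\<Sum>k\<in>UNIV. \<phi> k * a (($) x) (\<delta> k))"
      using linear_functional_expansion[OF linear_right] unfolding \<delta>_def .
    also have "\<dots> = (\<Sum>k\<in>UNIV. \<phi> k * l (\<delta> k))"
      using x unfolding T_def vec_eq_iff by simp
    also have "\<dots> = l \<phi>"
      unfolding \<delta>_def by (rule linear_functional_expansion[OF l, symmetric])
    finally show "a (($) x) \<phi> = l \<phi>" .
  qed
qed

lemma Cauchy_Schwarz_unit:
  assumes "a w w = 1"
  shows "a v w \<le> sqrt (a v v)"
proof -
  define t where "t = a v w"
  define d where "d j = (- t) * w j + v j" for j
  have "a d d = (- t) * a w d + a v d"
    unfolding d_def by (rule linear_functionalD[OF linear_left])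
  also have "a w d = (- t) * a w w + a w v"
    unfolding d_def by (rule linear_functionalD[OF linear_right])
  also have "a v d = (- t) * a v w + a v v"
    unfolding d_def by (rule linear_functionalD[OF linear_right])
  finally have "a d d = a v v - t\<^sup>2"
    using assms sym[of w v] unfolding t_def by (simp add: power2_eq_square)
  then have "t\<^sup>2 \<le> a v v"
    using nonneg[of d] by linarith
  then show ?thesis
    unfolding t_def by (rule real_le_rsqrt)
qed

lemma normalized:
  assumes "v \<noteq> (\<lambda>_. 0)"
  defines "w \<equiv> (\<lambda>j. (1 / sqrt (a v v)) * v j)"
  shows "a w w = 1" and "a v w = sqrt (a v v)"
proof -
  have pos: "0 < a v v"
    using assms(1) nonneg[of v] definite[of v] by fastforce
  then show "a w w = 1" "a v w = sqrt (a v v)"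
    unfolding w_def scale_left scale_right by (simp_all add: real_div_sqrt)
qed

lemma Sup_pairing_unit_sphere: "Sup {a v w | w. a w w = 1} = sqrt (a v v)"
proof (rule cSup_eq_maximum)
  obtain w where w: "a w w = 1" "a v w = sqrt (a v v)"
  proof (cases "v = (\<lambda>_. 0)")
    case True
    have "(\<lambda>_. 1) \<noteq> (\<lambda>_::'b. 0::real)"
      by (simp add: fun_eq_iff)
    moreover have "a v u = sqrt (a v v)" for u
      using True linear_functional_zero[OF linear_left] by simp
    ultimately show ?thesis
      using normalized(1) that by blast
  next
    case False
    with normalized that show ?thesis
      by blast
  qed
  then show "sqrt (a v v) \<in> {a v w | w. a w w = 1}"
    unfolding mem_Collect_eq by (intro exI[of _ w]) simp
qed (use Cauchy_Schwarz_unit in blast)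

lemma relaxation_energy_estimate:
  fixes \<mu> e e' d W :: "'b \<Rightarrow> real"
  assumes \<mu>: "\<And>j. 0 \<le> \<mu> j" and dt: "0 \<le> dt" and L: "0 \<le> L"
    and residual: "\<And>j. \<bar>L * e j - d j\<bar> \<le> L * \<bar>e j\<bar>"
    and error_eq: "(\<Sum>j\<in>UNIV. \<mu> j * e' j * W j) + dt * L * a e' W = dt * (L * a e W - a d W)"
    and W: "\<And>\<phi>. a W \<phi> = (\<Sum>j\<in>UNIV. \<mu> j * e' j * \<phi> j)"
  shows "a W W \<le> dt * L / 2 * (\<Sum>j\<in>UNIV. \<mu> j * (e j)\<^sup>2) - dt * L / 2 * (\<Sum>j\<in>UNIV. \<mu> j * (e' j)\<^sup>2)"
proof -
  have pairing: "a v W = (\<Sum>j\<in>UNIV. \<mu> j * e' j * v j)" for v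
    using W sym by metis
  have "a W W = dt * (L * a e W - a d W - L * a e' W)"
    using error_eq pairing[of W] by (simp add: algebra_simps)
  also have "\<dots> = (\<Sum>j\<in>UNIV. \<mu> j * dt * (e' j * (L * e j - d j - L * e' j)))"
    unfolding pairing by (simp add: sum_distrib_left sum_subtractf sum.distrib algebra_simps)
  also have "\<dots> \<le> (\<Sum>j\<in>UNIV. \<mu> j * dt * (L / 2 * ((e j)\<^sup>2 - (e' j)\<^sup>2)))"
    using relaxation_energy_le[OF L residual] \<mu> dt
    by (intro sum_mono mult_left_mono) simp_all
  also have "\<dots> = dt * L / 2 * (\<Sum>j\<in>UNIV. \<mu> j * (e j)\<^sup>2) - dt * L / 2 * (\<Sum>j\<in>UNIV. \<mu> j * (e' j)\<^sup>2)"
    by (simp add: sum_distrib_left sum_subtractf algebra_simps)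
  finally show ?thesis .
qed

lemma relaxation_dual_error_tendsto_zero:
  fixes \<mu> :: "'b \<Rightarrow> real" and e d :: "nat \<Rightarrow> 'b \<Rightarrow> real"
  assumes \<mu>: "\<And>j. 0 \<le> \<mu> j" and dt: "0 \<le> dt" and L: "0 \<le> L"
    and residual: "\<And>i j. \<bar>L * e i j - d i j\<bar> \<le> L * \<bar>e i j\<bar>"
    and error_eq: "\<And>i \<phi>. (\<Sum>j\<in>UNIV. \<mu> j * e (Suc i) j * \<phi> j) + dt * L * a (e (Suc i)) \<phi>
                        = dt * (L * a (e i) \<phi> - a (d i) \<phi>)"
  shows "(\<lambda>i. Sup {\<Sum>j\<in>UNIV. \<mu> j * e i j * w j | w. a w w = 1}) \<longlonglongrightarrow> 0"
proof -
  have "\<forall>i. \<exists>W. \<forall>\<phi>. a W \<phi> = (\<Sum>j\<in>UNIV. \<mu> j * e i j * \<phi> j)"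
    by (intro allI representation linear_functional_weighted_sum)
  then obtain W where W: "\<And>i \<phi>. a (W i) \<phi> = (\<Sum>j\<in>UNIV. \<mu> j * e i j * \<phi> j)"
    by metis
  define Q where "Q i = (\<Sum>j\<in>UNIV. \<mu> j * (e i j)\<^sup>2)" for i
  have "(\<lambda>i. a (W i) (W i)) \<longlonglongrightarrow> 0"
  proof (rule LIMSEQ_zero_if_le_decrements[where D = "\<lambda>i. dt * L / 2 * Q i"])
    show "0 \<le> a (W (Suc i)) (W (Suc i))" for i
      by (rule nonneg)
    show "a (W (Suc i)) (W (Suc i)) \<le> dt * L / 2 * Q i - dt * L / 2 * Q (Suc i)" for i
      unfolding Q_def using \<mu> dt L residual error_eq W by (rule relaxation_energy_estimate)
    show "0 \<le> dt * L / 2 * Q i" for i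
      unfolding Q_def using \<mu> dt L by (simp add: sum_nonneg)
  qed
  then have "(\<lambda>i. sqrt (a (W i) (W i))) \<longlonglongrightarrow> 0"
    using tendsto_real_sqrt by fastforce
  moreover have "Sup {\<Sum>j\<in>UNIV. \<mu> j * e i j * w j | w. a w w = 1} = sqrt (a (W i) (W i))" for i
    using Sup_pairing_unit_sphere[of "W i"] unfolding W .
  ultimately show ?thesis
    by simp
qed

end

lemma PiD_eq_value:
  assumes "disjoint_family \<Theta>s" and "x \<in> \<Theta>s k"
  shows "PiD \<Theta>s v x = v k"
proof -
  have "indicator (\<Theta>s j) x = (if j = k then 1 else 0 :: real)" for j
    using assms unfolding disjoint_family_on_def by (auto simp: indicator_def)
  then have "PiD \<Theta>s v x = (\<Sum>j\<in>UNIV. if j = k then v j else 0)"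
    unfolding PiD_def by (intro sum.cong) simp_all
  then show ?thesis
    by simp
qed

lemma PiD_eq_zero:
  assumes "\<And>k. x \<notin> \<Theta>s k"
  shows "PiD \<Theta>s v x = 0"
  using assms unfolding PiD_def by simp

lemma PiD_mult:
  assumes "disjoint_family \<Theta>s"
  shows "PiD \<Theta>s v x * PiD \<Theta>s w x = PiD \<Theta>s (\<lambda>j. v j * w j) x"
proof (cases "\<exists>k. x \<in> \<Theta>s k")
  case True
  then obtain k where "x \<in> \<Theta>s k"
    by blast
  then show ?thesis
    by (simp add: PiD_eq_value[OF assms])
next
  case False
  then have "\<And>k. x \<notin> \<Theta>s k"
    by blast
  then show ?thesis
    by (simp add: PiD_eq_zero)
qed

lemma PiD_diff: "(\<lambda>x. PiD \<Theta>s v x - PiD \<Theta>s w x) = PiD \<Theta>s (\<lambda>j. v j - w j)"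
  unfolding PiD_def by (simp add: sum_subtractf left_diff_distrib)

lemma integral_PiD:
  assumes \<Theta>: "\<Theta> \<in> lmeasurable"
    and sets: "\<And>j. \<Theta>s j \<in> sets lebesgue" and sub: "\<And>j. \<Theta>s j \<subseteq> \<Theta>"
  shows "(\<integral>x. PiD \<Theta>s c x \<partial>lebesgue_on \<Theta>) = (\<Sum>j\<in>UNIV. c j * measure lebesgue (\<Theta>s j))"
proof -
  interpret finite_measure "lebesgue_on \<Theta>"
    using \<Theta> by (rule finite_measure_lebesgue_on)
  have ind: "integrable (lebesgue_on \<Theta>) (indicator (\<Theta>s j) :: _ \<Rightarrow> real)" for j
  proof -
    have "\<Theta>s j \<in> sets (lebesgue_on \<Theta>)"
      using sets sub \<Theta> by (auto simp: sets_restrict_space_iff fmeasurable_def)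
    moreover have "\<Theta>s j \<inter> space (lebesgue_on \<Theta>) = \<Theta>s j"
      using sub by auto
    ultimately show ?thesis
      using emeasure_finite[of "\<Theta>s j"] by (simp add: integrable_indicator_iff less_top[symmetric])
  qed
  have "(\<integral>x. PiD \<Theta>s c x \<partial>lebesgue_on \<Theta>)
      = (\<Sum>j\<in>UNIV. \<integral>x. c j * indicator (\<Theta>s j) x \<partial>lebesgue_on \<Theta>)"
    unfolding PiD_def by (rule Bochner_Integration.integral_sum) (simp add: ind)
  also have "\<dots> = (\<Sum>j\<in>UNIV. c j * measure (lebesgue_on \<Theta>) (\<Theta>s j \<inter> \<Theta>))"
    by simp
  also have "\<dots> = (\<Sum>j\<in>UNIV. c j * measure lebesgue (\<Theta>s j))"
    using sub \<Theta> by (simp add: measure_restrict_space Int_absorb2 fmeasurable_def)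
  finally show ?thesis .
qed

lemma innerL2_PiD:
  assumes "\<Theta> \<in> lmeasurable" and "disjoint_family \<Theta>s"
    and "\<And>j. \<Theta>s j \<in> sets lebesgue" and "\<And>j. \<Theta>s j \<subseteq> \<Theta>"
  shows "innerL2 \<Theta> (PiD \<Theta>s v) (PiD \<Theta>s w) = (\<Sum>j\<in>UNIV. measure lebesgue (\<Theta>s j) * v j * w j)"
  unfolding innerL2_def PiD_mult[OF assms(2)] integral_PiD[OF assms(1,3,4)]
  by (simp add: mult_ac)

lemma integrable_inner_if_L2:
  fixes F H :: "'a::euclidean_space \<Rightarrow> 'a"
  assumes "L2 \<Theta> F" and "L2 \<Theta> H"
  shows "integrable (lebesgue_on \<Theta>) (\<lambda>x. F x \<bullet> H x)"
proof (rule Bochner_Integration.integrable_bound)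
  show "integrable (lebesgue_on \<Theta>) (\<lambda>x. (norm (F x))\<^sup>2 + (norm (H x))\<^sup>2)"
    using assms unfolding L2_def by simp
  show "(\<lambda>x. F x \<bullet> H x) \<in> borel_measurable (lebesgue_on \<Theta>)"
    using assms unfolding L2_def by (intro borel_measurable_inner) auto
  show "AE x in lebesgue_on \<Theta>. norm (F x \<bullet> H x) \<le> norm ((norm (F x))\<^sup>2 + (norm (H x))\<^sup>2)"
  proof (rule AE_I2)
    fix x
    have "\<bar>F x \<bullet> H x\<bar> \<le> norm (F x) * norm (H x)"
      by (rule Cauchy_Schwarz_ineq2)
    also have "\<dots> \<le> (norm (F x))\<^sup>2 + (norm (H x))\<^sup>2"
      using sum_squares_bound[of "norm (F x)" "norm (H x)"]
        mult_nonneg_nonneg[OF norm_ge_zero[of "F x"] norm_ge_zero[of "H x"]]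
      by linarith
    finally show "norm (F x \<bullet> H x) \<le> norm ((norm (F x))\<^sup>2 + (norm (H x))\<^sup>2)"
      by simp
  qed
qed

lemma innerL2v_lincomb_left:
  assumes "L2 \<Theta> F" and "L2 \<Theta> F'" and "L2 \<Theta> H"
  shows "innerL2v \<Theta> (\<lambda>x. c *\<^sub>R F x + c' *\<^sub>R F' x) H = c * innerL2v \<Theta> F H + c' * innerL2v \<Theta> F' H"
  using integrable_inner_if_L2[OF assms(1,3)] integrable_inner_if_L2[OF assms(2,3)]
  unfolding innerL2v_def by (simp add: inner_add_left)

lemma inner_product_form_gradient:
  assumes gd: "grad_disc_pc \<Theta> \<Theta>s G"
  shows "inner_product_form (\<lambda>v w. innerL2v \<Theta> (G v) (G w))"
proof
  have L2: "L2 \<Theta> (G v)" for v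
    using gd unfolding grad_disc_pc_def by blast
  have "G (\<lambda>j. c * v j + v' j) = (\<lambda>x. c *\<^sub>R G v x + 1 *\<^sub>R G v' x)" for c v v'
    using gd unfolding grad_disc_pc_def by simp
  then show "linear_functional (\<lambda>v. innerL2v \<Theta> (G v) (G w))" for w
    unfolding linear_functional_def using innerL2v_lincomb_left[OF L2 L2 L2, where c' = 1] by simp
  show "innerL2v \<Theta> (G v) (G w) = innerL2v \<Theta> (G w) (G v)" for v w
    unfolding innerL2v_def by (simp add: inner_commute)
  show "0 \<le> innerL2v \<Theta> (G v) (G v)" for v
    unfolding innerL2v_def by simp
  show "innerL2v \<Theta> (G v) (G v) = 0 \<Longrightarrow> v = (\<lambda>_. 0)" for v
    using gd unfolding grad_disc_pc_def by blast
qed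

lemma dual_normD_PiD:
  assumes gd: "grad_disc_pc \<Theta> \<Theta>s G" and \<Theta>: "\<Theta> \<in> lmeasurable"
  shows "dual_normD \<Theta> \<Theta>s G (PiD \<Theta>s v)
    = Sup {\<Sum>j\<in>UNIV. measure lebesgue (\<Theta>s j) * v j * w j | w. innerL2v \<Theta> (G w) (G w) = 1}"
  using gd unfolding dual_normD_def grad_disc_pc_def
  by (simp add: innerL2_PiD[OF \<Theta>])

lemma relaxation_error_equation:
  fixes \<zeta> :: "real \<Rightarrow> real"
  assumes gd: "grad_disc_pc \<Theta> \<Theta>s G" and \<Theta>: "\<Theta> \<in> lmeasurable"
    and exact: "innerL2 \<Theta> (PiD \<Theta>s un) (PiD \<Theta>s \<phi>) + dt * innerL2v \<Theta> (G (\<zeta> \<circ> un)) (G \<phi>)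
                = innerL2 \<Theta> r (PiD \<Theta>s \<phi>)"
    and step: "innerL2 \<Theta> (PiD \<Theta>s v) (PiD \<Theta>s \<phi>) + dt * L * innerL2v \<Theta> (G v) (G \<phi>)
               = dt * innerL2v \<Theta> (\<lambda>x. L *\<^sub>R G u x - G (\<zeta> \<circ> u) x) (G \<phi>) + innerL2 \<Theta> r (PiD \<Theta>s \<phi>)"
  shows "(\<Sum>j\<in>UNIV. measure lebesgue (\<Theta>s j) * (v j - un j) * \<phi> j)
           + dt * L * innerL2v \<Theta> (G (\<lambda>j. v j - un j)) (G \<phi>)
         = dt * (L * innerL2v \<Theta> (G (\<lambda>j. u j - un j)) (G \<phi>)
                 - innerL2v \<Theta> (G (\<lambda>j. \<zeta> (u j) - \<zeta> (un j))) (G \<phi>))"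
proof -
  interpret inner_product_form "\<lambda>v w. innerL2v \<Theta> (G v) (G w)"
    using gd by (rule inner_product_form_gradient)
  have L2: "L2 \<Theta> (G w)" for w
    using gd unfolding grad_disc_pc_def by blast
  have lincomb: "(\<lambda>x. L *\<^sub>R G u x - G (\<zeta> \<circ> u) x)
      = (\<lambda>x. L *\<^sub>R G u x + (- 1) *\<^sub>R G (\<zeta> \<circ> u) x)"
    by simp
  have relaxed: "innerL2v \<Theta> (\<lambda>x. L *\<^sub>R G u x - G (\<zeta> \<circ> u) x) (G \<phi>)
      = L * innerL2v \<Theta> (G u) (G \<phi>) - innerL2v \<Theta> (G (\<zeta> \<circ> u)) (G \<phi>)"
    unfolding lincomb innerL2v_lincomb_left[OF L2 L2 L2] by simp
  have zeta_diff: "innerL2v \<Theta> (G (\<lambda>j. \<zeta> (u j) - \<zeta> (un j))) (G \<phi>)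
      = innerL2v \<Theta> (G (\<zeta> \<circ> u)) (G \<phi>) - innerL2v \<Theta> (G (\<zeta> \<circ> un)) (G \<phi>)"
    using diff_left[of "\<zeta> \<circ> u" "\<zeta> \<circ> un"] by (simp add: o_def)
  have mass: "(\<Sum>j\<in>UNIV. measure lebesgue (\<Theta>s j) * (v j - un j) * \<phi> j)
      = innerL2 \<Theta> (PiD \<Theta>s v) (PiD \<Theta>s \<phi>) - innerL2 \<Theta> (PiD \<Theta>s un) (PiD \<Theta>s \<phi>)"
    using gd unfolding grad_disc_pc_def
    by (simp add: innerL2_PiD[OF \<Theta>] sum_subtractf algebra_simps)
  show ?thesis
    unfolding mass zeta_diff diff_left[of v un] diff_left[of u un]
    using exact step relaxed by (simp add: algebra_simps)
qed

theorem mainTheorem1: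
  fixes \<Theta> :: "'a::euclidean_space set"
    and \<Theta>s :: "'b::finite \<Rightarrow> 'a set"
    and G :: "('b \<Rightarrow> real) \<Rightarrow> 'a \<Rightarrow> 'a"
    and \<zeta> :: "real \<Rightarrow> real"
    and dt L L\<^sub>\<zeta> K :: real
    and r :: "'a \<Rightarrow> real"
    and un :: "'b \<Rightarrow> real"
    and u :: "nat \<Rightarrow> 'b \<Rightarrow> real"
  assumes "open \<Theta>" and "bounded \<Theta>"
    and "grad_disc_pc \<Theta> \<Theta>s G"
    and "dt > 0"
    and "mono \<zeta>" and "K-lipschitz_on UNIV \<zeta>" and "\<zeta> 0 = 0"
    and "AE x in lborel. \<zeta> differentiable (at x) \<and> 0 \<le> deriv \<zeta> x \<and> deriv \<zeta> x \<le> L\<^sub>\<zeta>"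
    and "L \<ge> L\<^sub>\<zeta> / 2"
    and "L2 \<Theta> r"
    and "\<forall>\<phi>. innerL2 \<Theta> (PiD \<Theta>s un) (PiD \<Theta>s \<phi>)
              + dt * innerL2v \<Theta> (G (\<zeta> \<circ> un)) (G \<phi>) = innerL2 \<Theta> r (PiD \<Theta>s \<phi>)"
    and "\<forall>i\<ge>1. \<forall>\<phi>. innerL2 \<Theta> (PiD \<Theta>s (u i)) (PiD \<Theta>s \<phi>)
              + dt * L * innerL2v \<Theta> (G (u i)) (G \<phi>)
            = dt * innerL2v \<Theta> (\<lambda>x. L *\<^sub>R G (u (i - 1)) x - G (\<zeta> \<circ> u (i - 1)) x) (G \<phi>)
              + innerL2 \<Theta> r (PiD \<Theta>s \<phi>)"
  shows "(\<lambda>i. dual_normD \<Theta> \<Theta>s G (\<lambda>x. PiD \<Theta>s (u i) x - PiD \<Theta>s un x)) \<longlonglongrightarrow> 0"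
proof -
  have \<Theta>: "\<Theta> \<in> lmeasurable"
    using assms(1,2) by (simp add: lmeasurable_open)
  interpret inner_product_form "\<lambda>v w. innerL2v \<Theta> (G v) (G w)"
    using assms(3) by (rule inner_product_form_gradient)
  have slope: "\<And>a b. a \<le> b \<Longrightarrow> \<zeta> b - \<zeta> a \<le> L\<^sub>\<zeta> * (b - a)"
    using assms(5,6,8) by (rule slope_le_if_ae_deriv_le)
  have "0 \<le> L"
    using slope[of 0 1] monoD[OF assms(5), of 0 1] assms(9) by simp
  show ?thesis
    unfolding PiD_diff dual_normD_PiD[OF assms(3) \<Theta>]
  proof (rule relaxation_dual_error_tendsto_zero
      [where e = "\<lambda>i j. u i j - un j" and d = "\<lambda>i j. \<zeta> (u i j) - \<zeta> (un j)"])
    show "\<bar>L * (u i j - un j) - (\<zeta> (u i j) - \<zeta> (un j))\<bar> \<le> L * \<bar>u i j - un j\<bar>" for i j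
      using assms(5) slope assms(9) by (rule abs_relaxation_residual_le)
    show "(\<Sum>j\<in>UNIV. measure lebesgue (\<Theta>s j) * (u (Suc i) j - un j) * \<phi> j)
        + dt * L * innerL2v \<Theta> (G (\<lambda>j. u (Suc i) j - un j)) (G \<phi>)
      = dt * (L * innerL2v \<Theta> (G (\<lambda>j. u i j - un j)) (G \<phi>)
              - innerL2v \<Theta> (G (\<lambda>j. \<zeta> (u i j) - \<zeta> (un j))) (G \<phi>))" for i \<phi>
      using assms(11,12) by (intro relaxation_error_equation[OF assms(3) \<Theta>]) auto
  qed (use \<open>0 \<le> L\<close> assms(4) in auto)
qed

end
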